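(* The pointwise limit $\bar V=\lim_{n\to\infty}V^n$ equals the optimal value function $V^{[0,\bar c]}$ on $[0,\infty)\times[0,\bar c]$.
   Context: Let $(W_t)_{t\ge0}$ be a standard Brownian motion and $X_t=x+\mu t+\sigma W_t$ with constants $\mu\in\mathbb R$, $\sigma>0$ and initial value $x\ge 0$; $(\mathcal F_t)_{t\ge0}$ is the completed filtration generated by $X$. Fix $q>0$, $\Lambda>0$, $\bar c>0$. For a set $S\subset[0,\bar c]$, $x\ge0$ and $c\in S$, $\Pi^S_{x,c}$ denotes the set of processes $C=(C_t)_{t\ge0}$ that are non-increasing, right-continuous, $(\mathcal F_t)$-adapted, take values in $S$, and satisfy $C_t\le c$ for all $t\ge 0$ (an immediate reduction at time $0$ is allowed). For such $C$, $X^C_t=X_t-\int_0^t C_s\,ds$, $\tau=\inf\{t\ge0: X^C_t<0\}$, $J(x;C)=\mathbb E\big[\int_0^{\tau}e^{-qs}(C_s+\Lambda)\,ds\big]$ and $V^S(x,c)=\sup_{C\in\Pi^S_{x,c}}J(x;C)$. Let $(\mathcal S^n)_{n\ge0}$ be finite sets with $\{0,\bar c\}=\mathcal S^0\subset\mathcal S^1\subset\cdots\subset[0,\bar c]$, each containing $0$ and $\bar c$, whose mesh size $\delta(\mathcal S^n)$ (maximal gap between consecutive elements) tends to $0$. For $(x,c)\in[0,\infty)\times[0,\bar c]$ let $\tilde c^n=\max\{c'\in\mathcal S^n: c'\le c\}$ and $V^n(x,c)=V^{\mathcal S^n}(x,\tilde c^n)$. Then $V^n(x,c)$ is non-decreasing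 in $n$ and bounded by $V^{[0,\bar c]}(x,c)$, and $\bar V(x,c):=\lim_{n\to\infty}V^n(x,c)$. *)

theory Defs
  imports "HOL-Probability.Probability"
begin

definition std_brownian_motion :: "'a measure \<Rightarrow> (real \<Rightarrow> 'a \<Rightarrow> real) \<Rightarrow> bool" where
  "std_brownian_motion M W \<longleftrightarrow>
     prob_space M \<and>
     (\<forall>t. W t \<in> borel_measurable M) \<and>
     (\<forall>\<omega>\<in>space M. W 0 \<omega> = 0 \<and> continuous_on {0..} (\<lambda>t. W t \<omega>)) \<and>
     (\<forall>s t. 0 \<le> s \<and> s < t \<longrightarrow>
        distributed M lborel (\<lambda>\<omega>. W t \<omega> - W s \<omega>)
          (\<lambda>y. ennreal (normal_density 0 (sqrt (t - s)) y))) \<and>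
     (\<forall>ts::real list. sorted_wrt (<) ts \<and> (\<forall>t\<in>set ts. 0 \<le> t) \<longrightarrow>
        prob_space.indep_vars M (\<lambda>_. borel)
          (\<lambda>i \<omega>. W (ts ! Suc i) \<omega> - W (ts ! i) \<omega>) {..<length ts - 1})"

definition gen_filtration :: "'a measure \<Rightarrow> (real \<Rightarrow> 'a \<Rightarrow> real) \<Rightarrow> real \<Rightarrow> 'a measure" where
  "gen_filtration M X t = sigma (space M)
     ({X s -` B \<inter> space M | s B. 0 \<le> s \<and> s \<le> t \<and> B \<in> sets borel} \<union> null_sets (completion M))"

text \<open>Admissible controls Pi^S_{x,c} (X already contains the initial value x).\<close>
definition admissible :: "'a measure \<Rightarrow> (real \<Rightarrow> 'a \<Rightarrow> real) \<Rightarrow> real set \<Rightarrow> real \<Rightarrow> (real \<Rightarrow> 'a \<Rightarrow> real) set" where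
  "admissible M X S c = {C.
     (\<forall>\<omega>\<in>space M. \<forall>s t. 0 \<le> s \<and> s \<le> t \<longrightarrow> C t \<omega> \<le> C s \<omega>) \<and>
     (\<forall>\<omega>\<in>space M. \<forall>t\<ge>0. continuous (at_right t) (\<lambda>s. C s \<omega>)) \<and>
     (\<forall>\<omega>\<in>space M. \<forall>t\<ge>0. C t \<omega> \<in> S \<and> C t \<omega> \<le> c) \<and>
     (\<forall>t\<ge>0. C t \<in> borel_measurable (gen_filtration M X t))}"

definition controlled :: "(real \<Rightarrow> 'a \<Rightarrow> real) \<Rightarrow> (real \<Rightarrow> 'a \<Rightarrow> real) \<Rightarrow> real \<Rightarrow> 'a \<Rightarrow> real" where
  "controlled X C t \<omega> = X t \<omega> - integral {0..t} (\<lambda>s. C s \<omega>)"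

definition ruin_time :: "(real \<Rightarrow> 'a \<Rightarrow> real) \<Rightarrow> (real \<Rightarrow> 'a \<Rightarrow> real) \<Rightarrow> 'a \<Rightarrow> ereal" where
  "ruin_time X C \<omega> = (INF t\<in>{t. 0 \<le> t \<and> controlled X C t \<omega> < 0}. ereal t)"

definition payoff :: "'a measure \<Rightarrow> (real \<Rightarrow> 'a \<Rightarrow> real) \<Rightarrow> real \<Rightarrow> real \<Rightarrow> (real \<Rightarrow> 'a \<Rightarrow> real) \<Rightarrow> ennreal" where
  "payoff M X q \<Lambda> C = (\<integral>\<^sup>+ \<omega>. (\<integral>\<^sup>+ s. indicator {s. 0 \<le> s \<and> ereal s < ruin_time X C \<omega>} s
        * ennreal (exp (- q * s) * (C s \<omega> + \<Lambda>)) \<partial>lborel) \<partial>M)"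

definition value_fun :: "'a measure \<Rightarrow> (real \<Rightarrow> 'a \<Rightarrow> real) \<Rightarrow> real \<Rightarrow> real \<Rightarrow> real set \<Rightarrow> real \<Rightarrow> ennreal" where
  "value_fun M X q \<Lambda> S c = (SUP C\<in>admissible M X S c. payoff M X q \<Lambda> C)"

definition mesh :: "real set \<Rightarrow> real" where
  "mesh S = Sup {s' - s | s s'. s \<in> S \<and> s' \<in> S \<and> s < s' \<and> S \<inter> {s<..<s'} = {}}"

definition round_down :: "real set \<Rightarrow> real \<Rightarrow> real" where
  "round_down S c = Max {c' \<in> S. c' \<le> c}"

end

theory Submission
  imports Defs
begin

text \<open>Every control with values in [0, cbar] is rounded down to the grid S, pointwise in time.
  The rounded control consumes less, so the controlled process is ruined later, and its
  consumption rate is smaller by at most mesh S; hence its payoff is smaller by at most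
  the integral of mesh S e^{-qs}, that is mesh S / q. Together with the trivial inequality
  V^n \<le> V^{[0,cbar]} this squeezes V^n to V^{[0,cbar]} as the mesh tends to 0.
  The comparison is pathwise, so nothing about the law of X is needed beyond M being a
  probability space.\<close>

lemma nn_integral_add_le:
  assumes g: "g \<in> borel_measurable M"
  shows "(\<integral>\<^sup>+ x. f x + g x \<partial>M) \<le> integral\<^sup>N M f + integral\<^sup>N M g"
  unfolding nn_integral_def_finite[of M "\<lambda>x. f x + g x"]
proof (rule SUP_least, safe)
  fix h assume h: "simple_function M h" "h \<le> (\<lambda>x. f x + g x)" "\<forall>x. h x < top"
  have hm: "h \<in> borel_measurable M" using h(1) by (rule borel_measurable_simple_function)
  have "integral\<^sup>S M h = integral\<^sup>N M h" using h(1) by (simp add: nn_integral_eq_simple_integral)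
  also have "\<dots> \<le> (\<integral>\<^sup>+ x. (h x - g x) + g x \<partial>M)"
    by (intro nn_integral_mono) (use ennreal_minus_le_iff in \<open>metis add.commute order_refl\<close>)
  also have "\<dots> = (\<integral>\<^sup>+ x. (h x - g x) \<partial>M) + integral\<^sup>N M g"
    by (rule nn_integral_add) (use hm g in auto)
  also have "\<dots> \<le> integral\<^sup>N M f + integral\<^sup>N M g"
  proof (intro add_right_mono nn_integral_mono)
    fix x
    have "h x \<le> f x + g x" using h(2) by (auto simp: le_fun_def)
    then show "h x - g x \<le> f x"
      using h(3)[rule_format, of x] by (auto simp add: ennreal_minus_le_iff add.commute)
  qed
  finally show "integral\<^sup>S M h \<le> integral\<^sup>N M f + integral\<^sup>N M g" .
qed

lemma tendsto_ennreal_squeeze: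
  fixes u :: "nat \<Rightarrow> ennreal" and e :: "nat \<Rightarrow> real"
  assumes upper: "\<And>n. u n \<le> v" and lower: "\<And>n. v \<le> u n + ennreal (e n)" and e: "e \<longlonglongrightarrow> 0"
  shows "u \<longlonglongrightarrow> v"
proof (cases "v = top")
  case True
  then have "u n = top" for n
    using lower[of n] by (simp add: top_unique)
  then have "u = (\<lambda>_. top)" by auto
  then show ?thesis using True by simp
next
  case False
  have "(\<lambda>n. ennreal (e n)) \<longlonglongrightarrow> ennreal 0"
    using e by (rule tendsto_ennrealI)
  then have "(\<lambda>n. v - ennreal (e n)) \<longlonglongrightarrow> v - 0"
    by (intro tendsto_diff_ennreal tendsto_const False) simp_all
  then have lim: "(\<lambda>n. v - ennreal (e n)) \<longlonglongrightarrow> v" by simp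
  have "v - ennreal (e n) \<le> u n" for n
    using lower[of n] by (simp add: ennreal_minus_le_iff add.commute)
  then show ?thesis
    using upper by (intro tendsto_sandwich[OF _ _ lim tendsto_const] always_eventually allI)
qed

lemma gap_le_mesh:
  assumes "finite S" "a \<in> S" "b \<in> S" "a < b" "S \<inter> {a<..<b} = {}"
  shows "b - a \<le> mesh S"
proof -
  let ?G = "{s' - s | s s'. s \<in> S \<and> s' \<in> S \<and> s < s' \<and> S \<inter> {s<..<s'} = {}}"
  have "?G \<subseteq> (\<lambda>(s, s'). s' - s) ` (S \<times> S)" by auto
  then have "finite ?G" using assms(1) by (meson finite_SigmaI finite_imageI finite_subset)
  moreover have "b - a \<in> ?G" using assms by blast
  ultimately show ?thesis unfolding mesh_def by (meson bdd_above_finite cSup_upper)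
qed

text \<open>Unlike round_down, rounding to the largest grid point strictly below y is
  left-continuous in y, which is what keeps right-continuity of nonincreasing controls.\<close>
definition round_down_strict :: "real set \<Rightarrow> real \<Rightarrow> real" where
  "round_down_strict S y = Max (insert 0 {g \<in> S. g < y})"

lemma round_down_strict_nonneg: "finite S \<Longrightarrow> 0 \<le> round_down_strict S y"
  by (simp add: round_down_strict_def)

lemma round_down_strict_in: "finite S \<Longrightarrow> 0 \<in> S \<Longrightarrow> round_down_strict S y \<in> S"
  using Max_in[of "insert 0 {g \<in> S. g < y}"] by (auto simp: round_down_strict_def)

lemma round_down_strict_ge: "finite S \<Longrightarrow> g \<in> S \<Longrightarrow> g < y \<Longrightarrow> g \<le> round_down_strict S y"
  by (simp add: round_down_strict_def)

lemma round_down_strict_less: "finite S \<Longrightarrow> 0 < y \<Longrightarrow> round_down_strict S y < y"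
  by (simp add: round_down_strict_def)

lemma round_down_strict_nonpos: "finite S \<Longrightarrow> y \<le> 0 \<Longrightarrow> round_down_strict S y = 0"
  by (auto simp: round_down_strict_def intro!: Max_eqI)

lemma round_down_strict_le: "finite S \<Longrightarrow> 0 \<le> y \<Longrightarrow> round_down_strict S y \<le> y"
  using round_down_strict_less[of S y] round_down_strict_nonpos[of S y] by fastforce

lemma mono_round_down_strict: "finite S \<Longrightarrow> mono (round_down_strict S)"
  by (auto simp: mono_def round_down_strict_def intro!: Max_mono)

lemma round_down_strict_le_round_down:
  assumes "finite S" "0 \<in> S" "0 \<le> y" "y \<le> c"
  shows "round_down_strict S y \<le> round_down S c"
  unfolding round_down_def using assms round_down_strict_in round_down_strict_le
  by (intro Max_ge) fastforce+

lemma round_down_le: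
  assumes "finite S" "0 \<in> S" "0 \<le> c"
  shows "round_down S c \<le> c"
proof -
  have "round_down S c \<in> {c' \<in> S. c' \<le> c}"
    unfolding round_down_def using assms by (intro Max_in) auto
  then show ?thesis by simp
qed

lemma round_down_strict_gap:
  assumes S: "finite S" "0 \<in> S" and b: "b \<in> S" "0 < b" and y: "0 \<le> y" "y \<le> b"
  shows "y - round_down_strict S y \<le> mesh S"
proof -
  have gap_pos: "z - round_down_strict S z \<le> mesh S" if z: "0 < z" "z \<le> b" for z
  proof -
    define a where "a = round_down_strict S z"
    define b' where "b' = Min {g \<in> S. z \<le> g}"
    have a: "a \<in> S" "a < z"
      unfolding a_def using S z round_down_strict_in round_down_strict_less by auto
    have "b' \<in> {g \<in> S. z \<le> g}"
      unfolding b'_def using S b z by (intro Min_in) auto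
    then have b': "b' \<in> S" "z \<le> b'" by auto
    have "S \<inter> {a<..<b'} = {}"
    proof (rule ccontr)
      assume "S \<inter> {a<..<b'} \<noteq> {}"
      then obtain g where g: "g \<in> S" "a < g" "g < b'" by auto
      show False
      proof (cases "g < z")
        case True
        then show False using round_down_strict_ge[OF S(1) g(1) True] g(2) by (simp add: a_def)
      next
        case False
        then have "b' \<le> g" unfolding b'_def using S(1) g(1) by (intro Min_le) auto
        then show False using g(3) by simp
      qed
    qed
    then have "b' - a \<le> mesh S" using gap_le_mesh[OF S(1) a(1) b'(1)] a b' by simp
    then show ?thesis using b' by (simp add: a_def)
  qed
  show ?thesis
  proof (cases "y = 0")
    case True
    have "0 < b - round_down_strict S b"
      using round_down_strict_less[OF S(1) b(2)] by simp
    also have "\<dots> \<le> mesh S"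
      using gap_pos b(2) by simp
    finally show ?thesis
      using True round_down_strict_nonpos[OF S(1), of 0] by simp
  next
    case False
    then show ?thesis using gap_pos y by simp
  qed
qed

lemma continuous_at_right_round_down_strict:
  fixes f :: "real \<Rightarrow> real"
  assumes S: "finite S" "0 \<in> S" and f: "continuous (at_right t) f" and f_anti: "\<And>s. t < s \<Longrightarrow> f s \<le> f t"
  shows "continuous (at_right t) (\<lambda>s. round_down_strict S (f s))"
proof -
  have "\<forall>\<^sub>F s in at_right t. round_down_strict S (f s) = round_down_strict S (f t)"
  proof (cases "f t \<le> 0")
    case True
    show ?thesis using eventually_at_right_less[of t]
    proof eventually_elim
      case (elim s)
      then show ?case using f_anti[of s] True by (simp add: round_down_strict_nonpos[OF S(1)])
    qed
  next
    case False
    let ?a = "round_down_strict S (f t)"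
    have "?a < f t" using round_down_strict_less[OF S(1)] False by simp
    then have "\<forall>\<^sub>F s in at_right t. ?a < f s"
      using f by (intro order_tendstoD(1)) (simp_all add: continuous_within)
    then show ?thesis using eventually_at_right_less[of t]
    proof eventually_elim
      case (elim s)
      then have "?a \<le> round_down_strict S (f s)"
        by (intro round_down_strict_ge round_down_strict_in S)
      moreover have "round_down_strict S (f s) \<le> ?a"
        using mono_round_down_strict[OF S(1)] f_anti[of s] elim by (simp add: monoD)
      ultimately show ?case by simp
    qed
  qed
  then show ?thesis
    unfolding continuous_within by (rule tendsto_eventually)
qed

lemma admissible_mono:
  assumes "S \<subseteq> T" "c' \<le> c"
  shows "admissible M X S c' \<subseteq> admissible M X T c"
  unfolding admissible_def using assms by (smt (verit) Collect_mono_iff subset_iff)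

lemma value_fun_mono:
  assumes "S \<subseteq> T" "c' \<le> c"
  shows "value_fun M X q \<Lambda> S c' \<le> value_fun M X q \<Lambda> T c"
  unfolding value_fun_def using admissible_mono[OF assms] by (rule SUP_subset_mono) simp

lemma round_down_strict_admissible:
  assumes S: "finite S" "0 \<in> S" and T: "T \<subseteq> {0..}" and c: "0 \<le> c"
    and C: "C \<in> admissible M X T c"
  shows "(\<lambda>t \<omega>. round_down_strict S (C t \<omega>)) \<in> admissible M X S (round_down S c)"
proof -
  have anti: "\<And>\<omega> s t. \<omega> \<in> space M \<Longrightarrow> 0 \<le> s \<Longrightarrow> s \<le> t \<Longrightarrow> C t \<omega> \<le> C s \<omega>"
    and right_cont: "\<And>\<omega> t. \<omega> \<in> space M \<Longrightarrow> 0 \<le> t \<Longrightarrow> continuous (at_right t) (\<lambda>s. C s \<omega>)"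
    and range: "\<And>\<omega> t. \<omega> \<in> space M \<Longrightarrow> 0 \<le> t \<Longrightarrow> C t \<omega> \<in> T \<and> C t \<omega> \<le> c"
    and adapted: "\<And>t. 0 \<le> t \<Longrightarrow> C t \<in> borel_measurable (gen_filtration M X t)"
    using C unfolding admissible_def by auto
  have mono: "mono (round_down_strict S)"
    using mono_round_down_strict[OF S(1)] .
  show ?thesis
    unfolding admissible_def
  proof safe
    fix \<omega> and s t :: real assume "\<omega> \<in> space M" "0 \<le> s" "s \<le> t"
    then show "round_down_strict S (C t \<omega>) \<le> round_down_strict S (C s \<omega>)"
      using anti mono by (simp add: monoD)
  next
    fix \<omega> and t :: real assume "\<omega> \<in> space M" "0 \<le> t"
    then show "continuous (at_right t) (\<lambda>s. round_down_strict S (C s \<omega>))"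
      using anti by (intro continuous_at_right_round_down_strict S right_cont) auto
  next
    fix \<omega> and t :: real
    show "round_down_strict S (C t \<omega>) \<in> S" using round_down_strict_in[OF S] .
  next
    fix \<omega> and t :: real assume "\<omega> \<in> space M" "0 \<le> t"
    then show "round_down_strict S (C t \<omega>) \<le> round_down S c"
      using range T by (intro round_down_strict_le_round_down S) auto
  next
    fix t :: real assume "0 \<le> t"
    then show "(\<lambda>\<omega>. round_down_strict S (C t \<omega>)) \<in> borel_measurable (gen_filtration M X t)"
      using measurable_compose[OF adapted borel_measurable_mono[OF mono]] by (simp add: o_def)
  qed
qed

lemma ruin_time_antimono:
  assumes C_anti: "\<And>s t. 0 \<le> s \<Longrightarrow> s \<le> t \<Longrightarrow> C t \<omega> \<le> C s \<omega>"
    and D_anti: "\<And>s t. 0 \<le> s \<Longrightarrow> s \<le> t \<Longrightarrow> D t \<omega> \<le> D s \<omega>"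
    and le: "\<And>s. 0 \<le> s \<Longrightarrow> D s \<omega> \<le> C s \<omega>"
  shows "ruin_time X C \<omega> \<le> ruin_time X D \<omega>"
proof -
  have integrable: "(\<lambda>s. F s \<omega>) integrable_on {0..t}"
    if "\<And>s t. 0 \<le> s \<Longrightarrow> s \<le> t \<Longrightarrow> F t \<omega> \<le> F s \<omega>" for F :: "real \<Rightarrow> 'a \<Rightarrow> real" and t
  proof -
    have "mono_on {0..t} (\<lambda>s. - F s \<omega>)" using that by (auto simp: mono_on_def)
    from integrable_neg[OF integrable_on_mono_on[OF this]] show ?thesis by simp
  qed
  have "integral {0..t} (\<lambda>s. D s \<omega>) \<le> integral {0..t} (\<lambda>s. C s \<omega>)" for t
    using integrable[of D, OF D_anti] integrable[of C, OF C_anti] le by (intro integral_le) auto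
  then have "controlled X C t \<omega> \<le> controlled X D t \<omega>" for t
    unfolding controlled_def by simp
  then have "{t. 0 \<le> t \<and> controlled X D t \<omega> < 0} \<subseteq> {t. 0 \<le> t \<and> controlled X C t \<omega> < 0}"
    by (auto intro: le_less_trans)
  then show ?thesis
    unfolding ruin_time_def by (rule INF_superset_mono) simp
qed

lemma nn_integral_discounted_le:
  fixes f g :: "real \<Rightarrow> real" and a b :: ereal
  assumes q: "0 < q" and \<delta>: "0 \<le> \<delta>" and ab: "a \<le> b"
    and fg: "\<And>s. 0 \<le> s \<Longrightarrow> f s \<le> g s + \<delta>" and g: "\<And>s. 0 \<le> s \<Longrightarrow> 0 \<le> g s"
  shows "(\<integral>\<^sup>+ s. indicator {s. 0 \<le> s \<and> ereal s < a} s * ennreal (exp (- q * s) * f s) \<partial>lborel)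
    \<le> (\<integral>\<^sup>+ s. indicator {s. 0 \<le> s \<and> ereal s < b} s * ennreal (exp (- q * s) * g s) \<partial>lborel)
      + ennreal (\<delta> / q)"
proof -
  let ?G = "\<lambda>s. indicator {s. 0 \<le> s \<and> ereal s < b} s * ennreal (exp (- q * s) * g s)"
  have "(\<integral>\<^sup>+ s. indicator {s. 0 \<le> s \<and> ereal s < a} s * ennreal (exp (- q * s) * f s) \<partial>lborel)
      \<le> (\<integral>\<^sup>+ s. ?G s + ennreal (\<delta> / q) * ennreal (exponential_density q s) \<partial>lborel)"
  proof (intro nn_integral_mono)
    fix s
    show "indicator {s. 0 \<le> s \<and> ereal s < a} s * ennreal (exp (- q * s) * f s)
        \<le> ?G s + ennreal (\<delta> / q) * ennreal (exponential_density q s)"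
    proof (cases "0 \<le> s \<and> ereal s < a")
      case True
      then have s: "0 \<le> s" and sb: "ereal s < b" using ab by auto
      have "exp (- q * s) * f s \<le> exp (- q * s) * g s + \<delta> * exp (- q * s)"
        using mult_left_mono[OF fg[OF s], of "exp (- q * s)"] by (simp add: algebra_simps)
      then have "ennreal (exp (- q * s) * f s) \<le> ennreal (exp (- q * s) * g s + \<delta> * exp (- q * s))"
        by (rule ennreal_leI)
      also have "\<dots> = ennreal (exp (- q * s) * g s) + ennreal (\<delta> * exp (- q * s))"
        using g[OF s] \<delta> by (intro ennreal_plus) auto
      finally have "ennreal (exp (- q * s) * f s)
          \<le> ennreal (exp (- q * s) * g s) + ennreal (\<delta> * exp (- q * s))" .
      moreover have "ennreal (\<delta> / q) * ennreal (exponential_density q s) = ennreal (\<delta> * exp (- q * s))"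
        using s q \<delta> by (simp add: exponential_density_def ennreal_mult[symmetric] mult.commute)
      ultimately show ?thesis using True sb by simp
    qed simp
  qed
  also have "\<dots> \<le> (\<integral>\<^sup>+ s. ?G s \<partial>lborel)
      + (\<integral>\<^sup>+ s. ennreal (\<delta> / q) * ennreal (exponential_density q s) \<partial>lborel)"
    by (rule nn_integral_add_le) measurable
  also have "(\<integral>\<^sup>+ s. ennreal (\<delta> / q) * ennreal (exponential_density q s) \<partial>lborel) = ennreal (\<delta> / q)"
    using nn_integral_erlang_ith_moment[OF q, of 0 0] by (simp add: nn_integral_cmult)
  finally show ?thesis .
qed

lemma payoff_le_payoff_add:
  assumes M: "prob_space M" and q: "0 < q" and \<delta>: "0 \<le> \<delta>"
    and ruin: "\<And>\<omega>. \<omega> \<in> space M \<Longrightarrow> ruin_time X C \<omega> \<le> ruin_time X D \<omega>"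
    and CD: "\<And>\<omega> s. \<omega> \<in> space M \<Longrightarrow> 0 \<le> s \<Longrightarrow> C s \<omega> \<le> D s \<omega> + \<delta>"
    and D: "\<And>\<omega> s. \<omega> \<in> space M \<Longrightarrow> 0 \<le> s \<Longrightarrow> 0 \<le> D s \<omega> + \<Lambda>"
  shows "payoff M X q \<Lambda> C \<le> payoff M X q \<Lambda> D + ennreal (\<delta> / q)"
proof -
  have "payoff M X q \<Lambda> C \<le> (\<integral>\<^sup>+ \<omega>. (\<integral>\<^sup>+ s. indicator {s. 0 \<le> s \<and> ereal s < ruin_time X D \<omega>} s
        * ennreal (exp (- q * s) * (D s \<omega> + \<Lambda>)) \<partial>lborel) + ennreal (\<delta> / q) \<partial>M)"
    unfolding payoff_def using ruin CD D
    by (intro nn_integral_mono nn_integral_discounted_le[OF q \<delta>]) force+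
  also have "\<dots> \<le> payoff M X q \<Lambda> D + (\<integral>\<^sup>+ \<omega>. ennreal (\<delta> / q) \<partial>M)"
    unfolding payoff_def by (rule nn_integral_add_le) simp
  also have "(\<integral>\<^sup>+ \<omega>. ennreal (\<delta> / q) \<partial>M) = ennreal (\<delta> / q)"
    using prob_space.emeasure_space_1[OF M] by simp
  finally show ?thesis .
qed


lemma value_fun_le_grid_add_mesh:
  assumes M: "prob_space M" and q: "0 < q" and \<Lambda>: "0 \<le> \<Lambda>"
    and S: "finite S" "0 \<in> S" "cbar \<in> S" "0 < cbar" and c: "0 \<le> c"
  shows "value_fun M X q \<Lambda> {0..cbar} c \<le> value_fun M X q \<Lambda> S (round_down S c) + ennreal (mesh S / q)"
  unfolding value_fun_def[of M X q \<Lambda> "{0..cbar}"]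
proof (rule SUP_least)
  fix C assume C: "C \<in> admissible M X {0..cbar} c"
  define D where "D t \<omega> = round_down_strict S (C t \<omega>)" for t \<omega>
  have D_adm: "D \<in> admissible M X S (round_down S c)"
    unfolding D_def using round_down_strict_admissible[OF S(1,2) _ c C] by auto
  have C_anti: "\<And>\<omega> s t. \<omega> \<in> space M \<Longrightarrow> 0 \<le> s \<Longrightarrow> s \<le> t \<Longrightarrow> C t \<omega> \<le> C s \<omega>"
    and C_range: "\<And>\<omega> t. \<omega> \<in> space M \<Longrightarrow> 0 \<le> t \<Longrightarrow> C t \<omega> \<in> {0..cbar}"
    using C unfolding admissible_def by auto
  have D_anti: "\<And>\<omega> s t. \<omega> \<in> space M \<Longrightarrow> 0 \<le> s \<Longrightarrow> s \<le> t \<Longrightarrow> D t \<omega> \<le> D s \<omega>"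
    using D_adm unfolding admissible_def by auto
  have mesh: "0 \<le> mesh S"
    using round_down_strict_gap[OF S, of 0] round_down_strict_nonpos[OF S(1), of 0] S(4) by simp
  have "payoff M X q \<Lambda> C \<le> payoff M X q \<Lambda> D + ennreal (mesh S / q)"
  proof (rule payoff_le_payoff_add[OF M q mesh])
    fix \<omega> assume \<omega>: "\<omega> \<in> space M"
    show "ruin_time X C \<omega> \<le> ruin_time X D \<omega>"
      using C_anti[OF \<omega>] D_anti[OF \<omega>] C_range[OF \<omega>]
      by (intro ruin_time_antimono) (auto simp: D_def round_down_strict_le S)
    fix s :: real assume "0 \<le> s"
    then show "C s \<omega> \<le> D s \<omega> + mesh S" "0 \<le> D s \<omega> + \<Lambda>"
      using round_down_strict_gap[OF S] C_range[OF \<omega>] round_down_strict_nonneg[OF S(1)] \<Lambda>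
      by (fastforce simp: D_def)+
  qed
  also have "payoff M X q \<Lambda> D \<le> value_fun M X q \<Lambda> S (round_down S c)"
    unfolding value_fun_def using D_adm by (rule SUP_upper)
  finally show "payoff M X q \<Lambda> C \<le> value_fun M X q \<Lambda> S (round_down S c) + ennreal (mesh S / q)"
    by (simp add: add_right_mono)
qed

theorem theorem5p2:
  fixes M :: "'a measure" and W :: "real \<Rightarrow> 'a \<Rightarrow> real"
    and \<mu> \<sigma> q \<Lambda> cbar x c :: real
    and Sn :: "nat \<Rightarrow> real set"
  assumes BM: "std_brownian_motion M W"
    and sigma_pos: "\<sigma> > 0" and q_pos: "q > 0" and Lambda_pos: "\<Lambda> > 0" and cbar_pos: "cbar > 0"
    and S0: "Sn 0 = {0, cbar}"
    and S_mono: "\<And>n. Sn n \<subseteq> Sn (Suc n)"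
    and S_finite: "\<And>n. finite (Sn n)"
    and S_sub: "\<And>n. Sn n \<subseteq> {0..cbar}"
    and S_ends: "\<And>n. 0 \<in> Sn n \<and> cbar \<in> Sn n"
    and S_mesh: "(\<lambda>n. mesh (Sn n)) \<longlonglongrightarrow> 0"
    and x_nonneg: "x \<ge> 0"
    and c_range: "c \<in> {0..cbar}"
  shows "(\<lambda>n. value_fun M (\<lambda>t \<omega>. x + \<mu> * t + \<sigma> * W t \<omega>) q \<Lambda> (Sn n) (round_down (Sn n) c))
           \<longlonglongrightarrow> value_fun M (\<lambda>t \<omega>. x + \<mu> * t + \<sigma> * W t \<omega>) q \<Lambda> {0..cbar} c"
proof (rule tendsto_ennreal_squeeze)
  let ?X = "\<lambda>t \<omega>. x + \<mu> * t + \<sigma> * W t \<omega>"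
  have M: "prob_space M" using BM unfolding std_brownian_motion_def by simp
  have c: "0 \<le> c" "c \<le> cbar" using c_range by auto
  fix n
  show "value_fun M ?X q \<Lambda> (Sn n) (round_down (Sn n) c) \<le> value_fun M ?X q \<Lambda> {0..cbar} c"
    using S_sub S_finite S_ends c by (intro value_fun_mono round_down_le) auto
  show "value_fun M ?X q \<Lambda> {0..cbar} c
      \<le> value_fun M ?X q \<Lambda> (Sn n) (round_down (Sn n) c) + ennreal (mesh (Sn n) / q)"
    using M q_pos Lambda_pos S_finite S_ends cbar_pos c
    by (intro value_fun_le_grid_add_mesh) auto
next
  show "(\<lambda>n. mesh (Sn n) / q) \<longlonglongrightarrow> 0"
    using tendsto_divide_zero[OF S_mesh] .
qed

end
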